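(* Let $G$ be an abelian group and let $M,N$ be two matroids over $G$ of the same rank $n$. Let $\mathcal{M}=\{a_1,\dots,a_n\}$ be a basis of $M$. Assume that for every $J\subseteq[n]$, $$r_N\Big(\bigcap_{i\in J}\big((-a_i+E(M))\cap E(N)\big)\Big)\le n-|J|.$$ Then $\mathcal{M}$ is matched to some basis of $N$.
   Context: A matroid over $G$ is a matroid $M$ whose finite ground set $E(M)$ is a subset of $G$; all matroids are assumed loopless. $r_N$ is the rank function of $N$: $r_N(X)=\max\{|X\cap I|: I \text{ independent in } N\}$. $-a+X=\{-a+x:x\in X\}$. For bases $\mathcal{M}=\{a_1,\dots,a_n\}$ of $M$ and $\mathcal{N}=\{b_1,\dots,b_n\}$ of $N$ (with $r(M)=r(N)=n>0$), $\mathcal{M}$ is matched to $\mathcal{N}$ if there is a permutation $\pi\in S_n$ with $a_i+b_{\pi(i)}\notin E(M)$ for all $i$. *)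

theory Defs
  imports Main
begin

text \<open>A matroid over an abelian group (the ambient type 'a) is given by a finite
ground set and an independence predicate satisfying the usual axioms; all matroids
are assumed loopless.\<close>

record 'a matroid =
  gset :: "'a set"
  indep :: "'a set \<Rightarrow> bool"

definition matroid :: "'a matroid \<Rightarrow> bool" where
  "matroid M \<longleftrightarrow>
     finite (gset M) \<and>
     indep M {} \<and>
     (\<forall>I. indep M I \<longrightarrow> I \<subseteq> gset M) \<and>
     (\<forall>I J. indep M J \<and> I \<subseteq> J \<longrightarrow> indep M I) \<and>
     (\<forall>I J. indep M I \<and> indep M J \<and> card I < card J \<longrightarrow>
        (\<exists>x\<in>J - I. indep M (insert x I)))"

definition loopless :: "'a matroid \<Rightarrow> bool" where
  "loopless M \<longleftrightarrow> (\<forall>x\<in>gset M. indep M {x})"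

definition is_basis :: "'a matroid \<Rightarrow> 'a set \<Rightarrow> bool" where
  "is_basis M B \<longleftrightarrow> indep M B \<and> (\<forall>I. indep M I \<and> B \<subseteq> I \<longrightarrow> I = B)"

definition rank_fn :: "'a matroid \<Rightarrow> 'a set \<Rightarrow> nat" where
  "rank_fn M X = Max {card (X \<inter> I) | I. indep M I}"

definition matroid_rank :: "'a matroid \<Rightarrow> nat" where
  "matroid_rank M = rank_fn M (gset M)"

definition matched_to :: "'a::ab_group_add matroid \<Rightarrow> nat \<Rightarrow> (nat \<Rightarrow> 'a) \<Rightarrow> (nat \<Rightarrow> 'a) \<Rightarrow> bool" where
  "matched_to M n a b \<longleftrightarrow>
     (\<exists>\<pi>. bij_betw \<pi> {..<n} {..<n} \<and> (\<forall>i<n. a i + b (\<pi> i) \<notin> gset M))"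

end

theory Submission
  imports Defs
begin

text \<open>Let \<open>A\<^sub>i = E(N) - (-a\<^sub>i + E(M))\<close> be the admissible partners of \<open>a\<^sub>i\<close>. The union of
the \<open>A\<^sub>i\<close>, \<open>i \<in> J\<close>, is the complement in \<open>E(N)\<close> of the intersection in the hypothesis, so
subadditivity of \<open>r\<^sub>N\<close> turns the hypothesis into Rado's condition \<open>|J| \<le> r\<^sub>N(\<Union>\<^sub>i\<^sub>\<in>\<^sub>J A\<^sub>i)\<close>.
Rado's theorem then yields an independent transversal \<open>b\<^sub>i \<in> A\<^sub>i\<close>; having \<open>n = r(N)\<close>
elements it is a basis of \<open>N\<close>, matched to the \<open>a\<^sub>i\<close> by the identity permutation.
Rado's theorem is proved by shrinking the sets: by submodularity, of two distinct elements
of some \<open>A\<^sub>k\<close> at least one can be removed preserving Rado's condition, and when all sets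
are singletons the condition says they form an independent set of size \<open>n\<close>.\<close>

definition rado_condition :: "'a matroid \<Rightarrow> nat \<Rightarrow> (nat \<Rightarrow> 'a set) \<Rightarrow> bool" where
  "rado_condition M n A \<longleftrightarrow> (\<forall>J \<subseteq> {..<n}. card J \<le> rank_fn M (\<Union>i\<in>J. A i))"

locale valid_matroid =
  fixes M :: "'a matroid"
  assumes matroid: "matroid M"
begin

lemma finite_ground: "finite (gset M)"
  using matroid unfolding matroid_def by blast

lemma indep_subset_ground: "indep M I \<Longrightarrow> I \<subseteq> gset M"
  using matroid unfolding matroid_def by blast

lemma indep_finite: "indep M I \<Longrightarrow> finite I"
  using indep_subset_ground finite_ground finite_subset by blast

lemma indep_subset: "indep M J \<Longrightarrow> I \<subseteq> J \<Longrightarrow> indep M I"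
  using matroid unfolding matroid_def by blast

lemma indep_empty: "indep M {}"
  using matroid unfolding matroid_def by blast

lemma indep_augment:
  "indep M I \<Longrightarrow> indep M J \<Longrightarrow> card I < card J \<Longrightarrow> \<exists>x\<in>J - I. indep M (insert x I)"
  using matroid unfolding matroid_def by blast

lemma finite_rank_candidates: "finite {card (X \<inter> I) | I. indep M I}"
proof -
  have "{card (X \<inter> I) | I. indep M I} \<subseteq> (\<lambda>I. card (X \<inter> I)) ` Pow (gset M)"
    using indep_subset_ground by blast
  then show ?thesis
    using finite_ground finite_subset by blast
qed

lemma card_indep_le_rank_fn: "indep M I \<Longrightarrow> I \<subseteq> X \<Longrightarrow> card I \<le> rank_fn M X"
  unfolding rank_fn_def using finite_rank_candidates
  by (intro Max_ge) (auto simp: Int_absorb1 intro!: exI[of _ I])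

lemma rank_fn_witness:
  obtains I where "indep M I" "I \<subseteq> X" "card I = rank_fn M X"
proof -
  have "rank_fn M X \<in> {card (X \<inter> I) | I. indep M I}"
    unfolding rank_fn_def using finite_rank_candidates indep_empty by (intro Max_in) auto
  then obtain I where "indep M I" "rank_fn M X = card (X \<inter> I)"
    by blast
  moreover have "indep M (X \<inter> I)"
    using \<open>indep M I\<close> by (rule indep_subset) auto
  ultimately show ?thesis
    using that[of "X \<inter> I"] by auto
qed

lemma rank_fn_le_card: "finite X \<Longrightarrow> rank_fn M X \<le> card X"
  by (metis card_mono rank_fn_witness)

lemma rank_fn_empty: "rank_fn M {} = 0"
  using rank_fn_le_card[of "{}"] by simp

lemma rank_fn_mono: "X \<subseteq> Y \<Longrightarrow> rank_fn M X \<le> rank_fn M Y"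
  by (metis card_indep_le_rank_fn order_trans rank_fn_witness)

lemma indep_iff_rank_fn_ge_card:
  assumes "finite X"
  shows "indep M X \<longleftrightarrow> card X \<le> rank_fn M X"
proof
  assume "card X \<le> rank_fn M X"
  moreover obtain I where "indep M I" "I \<subseteq> X" "card I = rank_fn M X"
    by (rule rank_fn_witness)
  ultimately have "I = X"
    using card_seteq[OF assms] by simp
  with \<open>indep M I\<close> show "indep M X" by simp
qed (simp add: card_indep_le_rank_fn)

lemma indep_extend_to_rank_fn:
  assumes "indep M I" "I \<subseteq> X"
  obtains B where "indep M B" "I \<subseteq> B" "B \<subseteq> X" "card B = rank_fn M X"
  using assms
proof (induction "rank_fn M X - card I" arbitrary: I rule: less_induct)
  case less
  show ?case
  proof (cases "card I < rank_fn M X")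
    case True
    obtain J where J: "indep M J" "J \<subseteq> X" "card J = rank_fn M X"
      by (rule rank_fn_witness)
    with True obtain x where x: "x \<in> J - I" "indep M (insert x I)"
      using indep_augment[OF less.prems(2) J(1)] by auto
    have "card (insert x I) = Suc (card I)"
      using x(1) indep_finite[OF less.prems(2)] by simp
    then show ?thesis
      using less.hyps[of "insert x I"] less.prems x J(2) True by auto
  next
    case False
    then show ?thesis
      using less.prems card_indep_le_rank_fn[of I X] by auto
  qed
qed

lemma rank_fn_submodular:
  "rank_fn M (X \<union> Y) + rank_fn M (X \<inter> Y) \<le> rank_fn M X + rank_fn M Y"
proof -
  \<comment> \<open>Extend a basis of \<open>X \<inter> Y\<close> to one of \<open>X \<union> Y\<close>, and count its traces on \<open>X\<close> and \<open>Y\<close>.\<close>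
  obtain B0 where B0: "indep M B0" "B0 \<subseteq> X \<inter> Y" "card B0 = rank_fn M (X \<inter> Y)"
    by (rule rank_fn_witness)
  then obtain B where B: "indep M B" "B0 \<subseteq> B" "B \<subseteq> X \<union> Y" "card B = rank_fn M (X \<union> Y)"
    using indep_extend_to_rank_fn[OF B0(1), of "X \<union> Y"] B0(2) by blast
  have "finite B"
    using B(1) by (rule indep_finite)
  have "card (B \<inter> X) + card (B \<inter> Y) = card B + card (B \<inter> X \<inter> Y)"
    using card_Un_Int[of "B \<inter> X" "B \<inter> Y"] \<open>finite B\<close> B(3)
    by (simp add: Int_Un_distrib[symmetric] Int_absorb2 Int_assoc Int_left_commute)
  moreover have "card B0 \<le> card (B \<inter> X \<inter> Y)"
    using B0 B \<open>finite B\<close> by (intro card_mono) auto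
  moreover have "card (B \<inter> X) \<le> rank_fn M X" "card (B \<inter> Y) \<le> rank_fn M Y"
    using B(1) by (auto intro!: card_indep_le_rank_fn elim: indep_subset)
  ultimately show ?thesis
    using B(4) B0(3) by linarith
qed

lemma rank_fn_Un_le: "rank_fn M (X \<union> Y) \<le> rank_fn M X + rank_fn M Y"
  using rank_fn_submodular[of X Y] by linarith

lemma is_basis_if_card_eq_rank:
  assumes "indep M B" "card B = matroid_rank M"
  shows "is_basis M B"
  unfolding is_basis_def
proof (intro conjI allI impI)
  fix I
  assume I: "indep M I \<and> B \<subseteq> I"
  then have "card I \<le> card B"
    using assms(2) card_indep_le_rank_fn indep_subset_ground unfolding matroid_rank_def by auto
  then show "I = B"
    using I indep_finite card_seteq by blast
qed (fact assms(1))

lemma rado_condition_nonempty: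
  assumes "rado_condition M n A" "i < n"
  shows "A i \<noteq> {}"
proof -
  have "card {i} \<le> rank_fn M (\<Union>j\<in>{i}. A j)"
    using assms unfolding rado_condition_def by blast
  then show ?thesis
    using rank_fn_empty by auto
qed

lemma rado_condition_remove_one:
  assumes rado: "rado_condition M n A" and "k < n"
    and y: "y1 \<in> A k" "y2 \<in> A k" "y1 \<noteq> y2"
  shows "rado_condition M n (A(k := A k - {y1})) \<or> rado_condition M n (A(k := A k - {y2}))"
proof (rule ccontr)
  assume "\<not> ?thesis"
  then obtain J1 J2
    where J1: "J1 \<subseteq> {..<n}" "rank_fn M (\<Union>i\<in>J1. (A(k := A k - {y1})) i) < card J1"
      and J2: "J2 \<subseteq> {..<n}" "rank_fn M (\<Union>i\<in>J2. (A(k := A k - {y2})) i) < card J2"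
    unfolding rado_condition_def by (meson not_le)
  have violator_contains_k: "k \<in> J"
    if "J \<subseteq> {..<n}" "rank_fn M (\<Union>i\<in>J. (A(k := B)) i) < card J" for J B
  proof (rule ccontr)
    assume "k \<notin> J"
    then have "(\<Union>i\<in>J. (A(k := B)) i) = (\<Union>i\<in>J. A i)"
      by auto
    then show False
      using that rado unfolding rado_condition_def by (simp add: not_le[symmetric])
  qed
  have "k \<in> J1" "k \<in> J2"
    using violator_contains_k J1 J2 by blast+
  define X where "X = (\<Union>i\<in>J1. (A(k := A k - {y1})) i)"
  define Y where "Y = (\<Union>i\<in>J2. (A(k := A k - {y2})) i)"
  have "(\<Union>i\<in>J1 \<union> J2. A i) \<subseteq> X \<union> Y"
    unfolding X_def Y_def using \<open>k \<in> J1\<close> \<open>k \<in> J2\<close> y(3) by fastforce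
  then have union: "card (J1 \<union> J2) \<le> rank_fn M (X \<union> Y)"
    using rado J1(1) J2(1) rank_fn_mono unfolding rado_condition_def by (meson le_supI order_trans)
  have "(\<Union>i\<in>J1 \<inter> J2 - {k}. A i) \<subseteq> X \<inter> Y"
    unfolding X_def Y_def by auto
  then have inter: "card (J1 \<inter> J2 - {k}) \<le> rank_fn M (X \<inter> Y)"
    using rado J1(1) rank_fn_mono unfolding rado_condition_def by (meson Diff_subset le_infI1 order_trans)
  have "finite J1" "finite J2"
    using J1(1) J2(1) finite_subset by blast+
  then have "card (J1 \<union> J2) + card (J1 \<inter> J2 - {k}) + 1 = card J1 + card J2"
    using card_Un_Int[of J1 J2] card_Suc_Diff1[of "J1 \<inter> J2" k] \<open>k \<in> J1\<close> \<open>k \<in> J2\<close> by simp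
  then show False
    using rank_fn_submodular[of X Y] union inter J1(2) J2(2) unfolding X_def Y_def by linarith
qed

theorem rado:
  assumes "\<forall>i<n. A i \<subseteq> gset M" and "rado_condition M n A"
  shows "\<exists>x. inj_on x {..<n} \<and> (\<forall>i<n. x i \<in> A i) \<and> indep M (x ` {..<n})"
  using assms
proof (induction "\<Sum>i<n. card (A i)" arbitrary: A rule: less_induct)
  case less
  show ?case
  proof (cases "\<exists>k<n. \<exists>y1 y2. y1 \<in> A k \<and> y2 \<in> A k \<and> y1 \<noteq> y2")
    case True
    then obtain k y1 y2 where k: "k < n" "y1 \<in> A k" "y2 \<in> A k" "y1 \<noteq> y2"
      by blast
    then obtain y where y: "y \<in> A k" "rado_condition M n (A(k := A k - {y}))"
      using rado_condition_remove_one[OF less.prems(2)] by blast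
    have finite_A: "finite (A i)" if "i < n" for i
      using less.prems(1) that finite_ground finite_subset by blast
    have "card (A k - {y}) < card (A k)"
      using finite_A k(1) y(1) by (intro card_Diff1_less)
    then have smaller: "(\<Sum>i<n. card ((A(k := A k - {y})) i)) < (\<Sum>i<n. card (A i))"
      using finite_A k(1) by (intro sum_strict_mono_ex1) (auto intro: card_mono)
    have shrunk: "(A(k := A k - {y})) i \<subseteq> A i" for i
      by simp
    then have "\<forall>i<n. (A(k := A k - {y})) i \<subseteq> gset M"
      using less.prems(1) by blast
    then obtain x where "inj_on x {..<n}" "\<forall>i<n. x i \<in> (A(k := A k - {y})) i"
      "indep M (x ` {..<n})"
      using less.hyps[OF smaller _ y(2)] by blast
    then show ?thesis
      using shrunk by blast
  next
    case False
    define x where "x i = (SOME y. y \<in> A i)" for i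
    have A_eq: "A i = {x i}" if "i < n" for i
      using False that rado_condition_nonempty[OF less.prems(2) that] someI_ex[of "\<lambda>y. y \<in> A i"]
      unfolding x_def by blast
    then have "(\<Union>i\<in>{..<n}. A i) = x ` {..<n}"
      by auto
    then have "n \<le> rank_fn M (x ` {..<n})"
      using less.prems(2) unfolding rado_condition_def by (metis card_lessThan order_refl)
    moreover have "card (x ` {..<n}) \<le> n"
      by (metis card_image_le card_lessThan finite_lessThan)
    moreover have "rank_fn M (x ` {..<n}) \<le> card (x ` {..<n})"
      by (simp add: rank_fn_le_card)
    ultimately have "indep M (x ` {..<n})" "inj_on x {..<n}"
      using indep_iff_rank_fn_ge_card eq_card_imp_inj_on[of "{..<n}" x] by auto
    then show ?thesis
      using A_eq by auto
  qed
qed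

lemma rado_condition_complements:
  assumes "matroid_rank M = n"
    and "\<forall>J \<subseteq> {..<n}. rank_fn M (\<Inter>i\<in>J. F i \<inter> gset M) \<le> n - card J"
  shows "rado_condition M n (\<lambda>i. gset M - F i)"
  unfolding rado_condition_def
proof (intro allI impI)
  fix J :: "nat set"
  assume J: "J \<subseteq> {..<n}"
  define Z where "Z = (\<Inter>i\<in>J. F i \<inter> gset M)"
  have "gset M \<subseteq> (\<Union>i\<in>J. gset M - F i) \<union> Z"
    unfolding Z_def by blast
  then have "n \<le> rank_fn M (\<Union>i\<in>J. gset M - F i) + rank_fn M Z"
    using assms(1) rank_fn_mono[of "gset M"] rank_fn_Un_le unfolding matroid_rank_def
    by (meson order_trans)
  moreover have "rank_fn M Z \<le> n - card J"
    unfolding Z_def using assms(2) J by blast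
  moreover have "card J \<le> n"
    using J by (metis card_lessThan card_mono finite_lessThan)
  ultimately show "card J \<le> rank_fn M (\<Union>i\<in>J. gset M - F i)"
    by linarith
qed

end

theorem proposition3p7:
  fixes M N :: "'a::ab_group_add matroid" and n :: nat and a :: "nat \<Rightarrow> 'a"
  assumes "matroid M" and "loopless M" and "matroid N" and "loopless N"
    and "matroid_rank M = n" and "matroid_rank N = n" and "n > 0"
    and "inj_on a {..<n}" and "is_basis M (a ` {..<n})"
    and "\<forall>J \<subseteq> {..<n}.
          rank_fn N (\<Inter>i\<in>J. ((\<lambda>x. - a i + x) ` gset M) \<inter> gset N) \<le> n - card J"
  shows "\<exists>b. inj_on b {..<n} \<and> is_basis N (b ` {..<n}) \<and> matched_to M n a b"
proof -
  \<comment> \<open>Only the ground set of \<open>M\<close> matters.\<close>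
  interpret N: valid_matroid N
    using assms(3) by unfold_locales
  define A where "A i = gset N - (\<lambda>x. - a i + x) ` gset M" for i
  have "rado_condition N n A"
    unfolding A_def using N.rado_condition_complements[OF assms(6,10)] .
  then obtain b where b: "inj_on b {..<n}" "\<forall>i<n. b i \<in> A i" "indep N (b ` {..<n})"
    using N.rado[of n A] unfolding A_def by blast
  have "is_basis N (b ` {..<n})"
    using b(1,3) assms(6) by (intro N.is_basis_if_card_eq_rank) (simp_all add: card_image)
  moreover have "a i + b i \<notin> gset M" if "i < n" for i
  proof
    assume "a i + b i \<in> gset M"
    then have "b i \<in> (\<lambda>x. - a i + x) ` gset M"
      by (rule rev_image_eqI) simp
    then show False
      using b(2) that unfolding A_def by blast
  qed
  then have "matched_to M n a b"
    unfolding matched_to_def by (intro exI[of _ id]) auto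
  ultimately show ?thesis
    using b(1) by blast
qed

end
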